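(* Let $W:[Q]^2\to([Q]\cup\{\phi\})^2$ be any function and $n\ge1$. If $s$ is the maximum size of a bipartite independent set in $G_{W,1}$, then the maximum size of a bipartite independent set in $G_{W,n}$ is $s^n$.
   Context: Fix an integer $q\ge1$, $Q=2^q$, $[Q]=\{1,\dots,Q\}$, and a symbol $\phi\notin[Q]$. $G_{W,n}$ is the bipartite graph whose two sides are two copies of $[Q]^n$, with $x^{(n)}=(x_1,\dots,x_n)$ (left) adjacent to $y^{(n)}=(y_1,\dots,y_n)$ (right) iff there is an index $i$ with $W(x_i,y_i)=(\phi,\phi)$. In a bipartite graph with sides $X,Y$, a bipartite independent set (BPIS) is a pair $(A,B)$ with $A\subseteq X$, $B\subseteq Y$ and no edge between $A$ and $B$; its size is $|A|\cdot|B|$. *)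

theory Defs
  imports Main
begin

(* [Q] = {1..Q}; the symbol phi is represented by None, an element a of [Q] by Some a.
   Vertices of G_{W,n} (on either side) are words of length n over [Q], as lists. *)

definition words :: "nat \<Rightarrow> nat \<Rightarrow> nat list set" where
  "words Q n = {xs. length xs = n \<and> set xs \<subseteq> {1..Q}}"

definition GW_adj :: "(nat \<Rightarrow> nat \<Rightarrow> nat option \<times> nat option) \<Rightarrow> nat \<Rightarrow> nat list \<Rightarrow> nat list \<Rightarrow> bool" where
  "GW_adj W n x y = (\<exists>i<n. W (x ! i) (y ! i) = (None, None))"

definition is_bpis :: "(nat \<Rightarrow> nat \<Rightarrow> nat option \<times> nat option) \<Rightarrow> nat \<Rightarrow> nat \<Rightarrow> nat list set \<Rightarrow> nat list set \<Rightarrow> bool" where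
  "is_bpis W Q n A B = (A \<subseteq> words Q n \<and> B \<subseteq> words Q n \<and> (\<forall>x\<in>A. \<forall>y\<in>B. \<not> GW_adj W n x y))"

definition max_bpis :: "(nat \<Rightarrow> nat \<Rightarrow> nat option \<times> nat option) \<Rightarrow> nat \<Rightarrow> nat \<Rightarrow> nat" where
  "max_bpis W Q n = Max {card A * card B | A B. is_bpis W Q n A B}"

end

theory Submission
  imports Defs "HOL-Library.FuncSet"
begin

text \<open>Projecting a bipartite independent set (A, B) of G_{W,n} to the i-th letters gives a
  bipartite independent set (A_i, B_i) of G_{W,1}, and A, B lie in the Cartesian products of the
  A_i, resp. B_i; hence |A| |B| <= prod_i |A_i| |B_i| <= s^n. Conversely, since adjacency in G_{W,n}
  only needs one coordinate where W yields (phi, phi), the n-th Cartesian powers of an optimal pair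
  for G_{W,1} are independent in G_{W,n}, of size s^n.\<close>

definition prodset :: "(nat \<Rightarrow> 'a set) \<Rightarrow> nat \<Rightarrow> 'a list set" where
  "prodset P n = {xs. length xs = n \<and> (\<forall>i<n. xs ! i \<in> P i)}"

lemma bij_betw_prodset_PiE:
  "bij_betw (\<lambda>xs. restrict ((!) xs) {..<n}) (prodset P n) (\<Pi>\<^sub>E i\<in>{..<n}. P i)"
proof (rule bij_betw_byWitness[where f' = "\<lambda>f. map f [0..<n]"])
  show "\<forall>xs\<in>prodset P n. map (restrict ((!) xs) {..<n}) [0..<n] = xs"
    by (auto simp: prodset_def intro: nth_equalityI)
  show "\<forall>f\<in>\<Pi>\<^sub>E i\<in>{..<n}. P i. restrict ((!) (map f [0..<n])) {..<n} = f"
  proof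
    fix f assume f: "f \<in> (\<Pi>\<^sub>E i\<in>{..<n}. P i)"
    show "restrict ((!) (map f [0..<n])) {..<n} = f"
    proof
      fix i show "restrict ((!) (map f [0..<n])) {..<n} i = f i"
        using PiE_arb[OF f, of i] by simp
    qed
  qed
  show "(\<lambda>xs. restrict ((!) xs) {..<n}) ` prodset P n \<subseteq> (\<Pi>\<^sub>E i\<in>{..<n}. P i)"
  proof
    fix f assume "f \<in> (\<lambda>xs. restrict ((!) xs) {..<n}) ` prodset P n"
    then obtain xs where "xs \<in> prodset P n" and f: "f = restrict ((!) xs) {..<n}" by blast
    then show "f \<in> (\<Pi>\<^sub>E i\<in>{..<n}. P i)"
      unfolding f restrict_PiE_iff by (simp add: prodset_def)
  qed
  show "(\<lambda>f. map f [0..<n]) ` (\<Pi>\<^sub>E i\<in>{..<n}. P i) \<subseteq> prodset P n"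
    unfolding prodset_def by (intro image_subsetI) (simp add: PiE_iff)
qed

lemma card_prodset: "card (prodset P n) = (\<Prod>i<n. card (P i))"
  using bij_betw_same_card[OF bij_betw_prodset_PiE] by (simp add: card_PiE)

lemma prodset_subset_words:
  assumes "\<And>i. i < n \<Longrightarrow> P i \<subseteq> {1..Q}"
  shows "prodset P n \<subseteq> words Q n"
  using assms by (fastforce simp: prodset_def words_def in_set_conv_nth)

lemma subset_prodset_nth_image:
  assumes "A \<subseteq> words Q n"
  shows "A \<subseteq> prodset (\<lambda>i. (\<lambda>x. x ! i) ` A) n"
  using assms by (auto simp: prodset_def words_def)

lemma finite_words: "finite (words Q n)"
  using finite_lists_length_eq[of "{1..Q}" n] by (simp add: words_def conj_commute)

lemma finite_bpis_sizes: "finite {card A * card B | A B. is_bpis W Q n A B}"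
proof -
  have "{(A, B). is_bpis W Q n A B} \<subseteq> Pow (words Q n) \<times> Pow (words Q n)"
    by (auto simp: is_bpis_def)
  then have "finite {(A, B). is_bpis W Q n A B}"
    by (rule finite_subset) (simp add: finite_words)
  moreover have "{card A * card B | A B. is_bpis W Q n A B}
      = (\<lambda>(A, B). card A * card B) ` {(A, B). is_bpis W Q n A B}"
    by auto
  ultimately show ?thesis by simp
qed

lemma bpis_size_le_max_bpis: "is_bpis W Q n A B \<Longrightarrow> card A * card B \<le> max_bpis W Q n"
  unfolding max_bpis_def using finite_bpis_sizes by (intro Max_ge) auto

lemma max_bpis_attained: "\<exists>A B. is_bpis W Q n A B \<and> max_bpis W Q n = card A * card B"
proof -
  have "is_bpis W Q n {} {}" by (simp add: is_bpis_def)
  then have "{card A * card B | A B. is_bpis W Q n A B} \<noteq> {}" by blast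
  from Max_in[OF finite_bpis_sizes this] show ?thesis
    unfolding max_bpis_def by auto
qed

definition letter_bpis :: "(nat \<Rightarrow> nat \<Rightarrow> nat option \<times> nat option) \<Rightarrow> nat \<Rightarrow> nat set \<Rightarrow> nat set \<Rightarrow> bool" where
  "letter_bpis W Q P R \<longleftrightarrow> P \<subseteq> {1..Q} \<and> R \<subseteq> {1..Q} \<and> (\<forall>a\<in>P. \<forall>b\<in>R. W a b \<noteq> (None, None))"

lemma is_bpis_singletons_iff:
  "is_bpis W Q 1 ((\<lambda>a. [a]) ` P) ((\<lambda>a. [a]) ` R) \<longleftrightarrow> letter_bpis W Q P R"
  by (auto simp: is_bpis_def letter_bpis_def words_def GW_adj_def)

lemma singletons_hd_image_words_one: "A \<subseteq> words Q 1 \<Longrightarrow> (\<lambda>a. [a]) ` hd ` A = A"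
  by (force simp: words_def length_Suc_conv)

lemma card_singletons: "card ((\<lambda>a. [a]) ` P) = card P"
  by (simp add: card_image inj_on_def)

lemma letter_bpis_size_le_max_bpis:
  assumes "letter_bpis W Q P R"
  shows "card P * card R \<le> max_bpis W Q 1"
  using bpis_size_le_max_bpis[of W Q 1 "(\<lambda>a. [a]) ` P" "(\<lambda>a. [a]) ` R"] assms
  unfolding is_bpis_singletons_iff card_singletons .

lemma max_bpis_one_attained: "\<exists>P R. letter_bpis W Q P R \<and> max_bpis W Q 1 = card P * card R"
proof -
  obtain A B where AB: "is_bpis W Q 1 A B" and max: "max_bpis W Q 1 = card A * card B"
    using max_bpis_attained by blast
  have A: "(\<lambda>a. [a]) ` hd ` A = A" and B: "(\<lambda>a. [a]) ` hd ` B = B"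
    using AB singletons_hd_image_words_one[of A Q] singletons_hd_image_words_one[of B Q]
    unfolding is_bpis_def by blast+
  have "letter_bpis W Q (hd ` A) (hd ` B)"
    using AB unfolding is_bpis_singletons_iff[symmetric] A B .
  moreover have "max_bpis W Q 1 = card (hd ` A) * card (hd ` B)"
    using max card_singletons[of "hd ` A"] card_singletons[of "hd ` B"] unfolding A B by simp
  ultimately show ?thesis by blast
qed

lemma is_bpis_prodset:
  assumes "\<And>i. i < n \<Longrightarrow> letter_bpis W Q (P i) (R i)"
  shows "is_bpis W Q n (prodset P n) (prodset R n)"
  using assms prodset_subset_words[of n P Q] prodset_subset_words[of n R Q]
  by (fastforce simp: is_bpis_def letter_bpis_def GW_adj_def prodset_def)

lemma letter_bpis_nth_image:
  assumes "is_bpis W Q n A B" and "i < n"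
  shows "letter_bpis W Q ((\<lambda>x. x ! i) ` A) ((\<lambda>x. x ! i) ` B)"
  unfolding letter_bpis_def
proof (intro conjI ballI)
  have "x ! i \<in> {1..Q}" if "x \<in> words Q n" for x
    using that assms(2) nth_mem[of i x] unfolding words_def by blast
  then show "(\<lambda>x. x ! i) ` A \<subseteq> {1..Q}" and "(\<lambda>x. x ! i) ` B \<subseteq> {1..Q}"
    using assms(1) by (auto simp: is_bpis_def)
  fix a b assume "a \<in> (\<lambda>x. x ! i) ` A" and "b \<in> (\<lambda>x. x ! i) ` B"
  then show "W a b \<noteq> (None, None)"
    using assms unfolding is_bpis_def GW_adj_def by blast
qed

lemma max_bpis_le_power: "max_bpis W Q n \<le> max_bpis W Q 1 ^ n"
proof -
  obtain A B where AB: "is_bpis W Q n A B" and max: "max_bpis W Q n = card A * card B"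
    using max_bpis_attained by blast
  define PA where "PA = (\<lambda>i. (\<lambda>x. x ! i) ` A)"
  define PB where "PB = (\<lambda>i. (\<lambda>x. x ! i) ` B)"
  have letter: "letter_bpis W Q (PA i) (PB i)" if "i < n" for i
    using letter_bpis_nth_image[OF AB that] by (simp add: PA_def PB_def)
  have "is_bpis W Q n (prodset PA n) (prodset PB n)"
    using letter by (rule is_bpis_prodset)
  then have fin: "finite (prodset PA n)" "finite (prodset PB n)"
    using finite_words finite_subset by (auto simp: is_bpis_def)
  have "A \<subseteq> prodset PA n" "B \<subseteq> prodset PB n"
    using AB subset_prodset_nth_image unfolding is_bpis_def PA_def PB_def by blast+
  then have "card A * card B \<le> card (prodset PA n) * card (prodset PB n)"
    using fin by (intro mult_le_mono card_mono)
  also have "\<dots> = (\<Prod>i<n. card (PA i) * card (PB i))"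
    by (simp add: card_prodset prod.distrib)
  also have "\<dots> \<le> (\<Prod>i<n. max_bpis W Q 1)"
    using letter letter_bpis_size_le_max_bpis by (intro prod_mono) auto
  finally show ?thesis using max by simp
qed

lemma power_le_max_bpis: "max_bpis W Q 1 ^ n \<le> max_bpis W Q n"
proof -
  obtain P R where PR: "letter_bpis W Q P R" and max: "max_bpis W Q 1 = card P * card R"
    using max_bpis_one_attained by blast
  have "is_bpis W Q n (prodset (\<lambda>_. P) n) (prodset (\<lambda>_. R) n)"
    using PR by (rule is_bpis_prodset)
  from bpis_size_le_max_bpis[OF this] show ?thesis
    unfolding card_prodset max by (simp add: power_mult_distrib)
qed

theorem mainTheorem6:
  fixes q n s :: nat and W :: "nat \<Rightarrow> nat \<Rightarrow> nat option \<times> nat option"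
  assumes "q \<ge> 1" and "n \<ge> 1"
    and "\<And>x y. x \<in> {1..2^q} \<Longrightarrow> y \<in> {1..2^q} \<Longrightarrow>
           (\<forall>a. fst (W x y) = Some a \<longrightarrow> a \<in> {1..2^q}) \<and> (\<forall>b. snd (W x y) = Some b \<longrightarrow> b \<in> {1..2^q})"
    and "s = max_bpis W (2^q) 1"
  shows "max_bpis W (2^q) n = s ^ n"
  unfolding \<open>s = max_bpis W (2^q) 1\<close>
  by (intro antisym max_bpis_le_power power_le_max_bpis)

end
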